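(* Let $V$ be a symplectic vector space, $L\subset V$ a Lagrangian subspace and $\mathcal L$ a non-empty set of Lagrangian subspaces each transverse to $L$. Let $\mathcal S(\mathcal L,L)$ be the set of Lagrangian subspaces $L_-$ transverse to $L$ such that $\mathcal L\subset C(L_-,L)$. Then $\mathcal S(\mathcal L,L)$ is convex with respect to the natural affine structure on the space of Lagrangian subspaces transverse to $L$. If $\mathcal L$ is compact, then $\mathcal S(\mathcal L,L)$ is non-empty, hence contractible.
   Context: For Lagrangians $A,B,C$ with $A,B$ transverse to $C$, define $A^{(B,C)}:B\to\mathbb R$ by $A^{(B,C)}(X)=\omega(Y,X)$, where $Y\in C$ is the unique vector with $X+Y\in A$; write $A\succ_C B$ if $A^{(B,C)}$ is positive definite. For a polarization (pair of transverse Lagrangians) $(\tau,\nu)$, the positive zone $C(\tau,\nu)$ is the set of Lagrangians $T$ transverse to $\nu$ with $T\succ_\nu\tau$. The set of Lagrangian subspaces transverse to $L$ is an affine space: fixing a Lagrangian $H$ transverse to $L$, such subspaces are identified with quadratic forms on $H$ (graphs of symmetric maps $H\to L$), and the resulting affine structure is independent of $H$. *)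

theory Defs
  imports "HOL-Analysis.Analysis"
begin

definition symplectic_form :: "('a::euclidean_space \<Rightarrow> 'a \<Rightarrow> real) \<Rightarrow> bool" where
  "symplectic_form \<omega> \<longleftrightarrow> bilinear \<omega> \<and> (\<forall>x y. \<omega> x y = - \<omega> y x)
     \<and> (\<forall>x. (\<forall>y. \<omega> x y = 0) \<longrightarrow> x = 0)"

definition lagrangian :: "('a::euclidean_space \<Rightarrow> 'a \<Rightarrow> real) \<Rightarrow> 'a set \<Rightarrow> bool" where
  "lagrangian \<omega> L \<longleftrightarrow> subspace L \<and> (\<forall>x\<in>L. \<forall>y\<in>L. \<omega> x y = 0) \<and> 2 * dim L = DIM('a)"

definition transverse :: "'a::euclidean_space set \<Rightarrow> 'a set \<Rightarrow> bool" where
  "transverse A B \<longleftrightarrow> A \<inter> B = {0} \<and> (\<forall>v. \<exists>a\<in>A. \<exists>b\<in>B. v = a + b)"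

text \<open>The form A^(B,C) on B: X \<mapsto> omega(Y,X), Y \<in> C the unique vector with X + Y \<in> A.\<close>
definition rel_form :: "('a::euclidean_space \<Rightarrow> 'a \<Rightarrow> real) \<Rightarrow> 'a set \<Rightarrow> 'a set \<Rightarrow> 'a set \<Rightarrow> 'a \<Rightarrow> real" where
  "rel_form \<omega> A B C X = \<omega> (THE Y. Y \<in> C \<and> X + Y \<in> A) X"

definition succ_rel :: "('a::euclidean_space \<Rightarrow> 'a \<Rightarrow> real) \<Rightarrow> 'a set \<Rightarrow> 'a set \<Rightarrow> 'a set \<Rightarrow> bool" where
  "succ_rel \<omega> A C B \<longleftrightarrow> transverse A C \<and> transverse B C \<and>
     (\<forall>X\<in>B. X \<noteq> 0 \<longrightarrow> rel_form \<omega> A B C X > 0)"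

definition pos_zone :: "('a::euclidean_space \<Rightarrow> 'a \<Rightarrow> real) \<Rightarrow> 'a set \<Rightarrow> 'a set \<Rightarrow> 'a set set" where
  "pos_zone \<omega> \<tau> \<nu> = {T. lagrangian \<omega> T \<and> transverse T \<nu> \<and> succ_rel \<omega> T \<nu> \<tau>}"

definition S_set :: "('a::euclidean_space \<Rightarrow> 'a \<Rightarrow> real) \<Rightarrow> 'a set set \<Rightarrow> 'a set \<Rightarrow> 'a set set" where
  "S_set \<omega> \<LL> L = {Lm. lagrangian \<omega> Lm \<and> transverse Lm L \<and> \<LL> \<subseteq> pos_zone \<omega> Lm L}"

text \<open>Affine chart: for H transverse to L, a subspace T transverse to L is the graph of
the linear map graph_map L T : H \<rightarrow> L, h \<mapsto> the unique l \<in> L with h + l \<in> T.\<close>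
definition graph_map :: "'a::euclidean_space set \<Rightarrow> 'a set \<Rightarrow> 'a \<Rightarrow> 'a" where
  "graph_map L T h = (THE l. l \<in> L \<and> h + l \<in> T)"

text \<open>Affine combination (1-t) T1 + t T2 computed in the chart given by H:
the graph over H of (1-t) A_T1 + t A_T2.\<close>
definition aff_comb :: "'a::euclidean_space set \<Rightarrow> 'a set \<Rightarrow> real \<Rightarrow> 'a set \<Rightarrow> 'a set \<Rightarrow> 'a set" where
  "aff_comb H L t T1 T2 =
     {h + ((1 - t) *\<^sub>R graph_map L T1 h + t *\<^sub>R graph_map L T2 h) | h. h \<in> H}"

text \<open>Convexity of a set of Lagrangians transverse to L w.r.t. the affine structure
(tested in every chart H; the structure is independent of H).\<close>
definition lag_convex :: "('a::euclidean_space \<Rightarrow> 'a \<Rightarrow> real) \<Rightarrow> 'a set \<Rightarrow> 'a set set \<Rightarrow> bool" where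
  "lag_convex \<omega> L \<SS> \<longleftrightarrow> (\<forall>H. lagrangian \<omega> H \<and> transverse H L \<longrightarrow>
     (\<forall>T1\<in>\<SS>. \<forall>T2\<in>\<SS>. \<forall>t\<in>{0..1}. aff_comb H L t T1 T2 \<in> \<SS>))"

text \<open>Topology on subspaces (Grassmannian): a subspace W is identified with its
orthogonal projection, an element of the normed space 'a \<Rightarrow>L 'a.\<close>
definition proj_op :: "'a::euclidean_space set \<Rightarrow> 'a \<Rightarrow>\<^sub>L 'a" where
  "proj_op W = Blinfun (closest_point W)"

end

theory Submission
  imports Defs
begin

text \<open>Fix a Lagrangian \<open>H\<close> transverse to \<open>L\<close>. Every Lagrangian \<open>T'\<close> transverse to \<open>L\<close> is the
graph over \<open>H\<close> of \<open>G\<^sub>T\<^sub>' = graph_map L T'\<close>, a map \<open>H \<rightarrow> L\<close> that is symmetric for \<open>\<omega>\<close>, and for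
\<open>T\<close> transverse to \<open>L\<close> the form \<open>rel_form \<omega> T T' L\<close> takes the value \<open>\<omega> (G\<^sub>T h - G\<^sub>T\<^sub>' h) h\<close> at
\<open>h + G\<^sub>T\<^sub>' h\<close>. Hence \<open>T' \<in> S(\<LL>, L)\<close> means that the quadratic form \<open>h \<mapsto> \<omega> (G\<^sub>T\<^sub>' h) h\<close> lies
strictly below \<open>h \<mapsto> \<omega> (G\<^sub>T h) h\<close> on \<open>H - {0}\<close> for every \<open>T \<in> \<LL>\<close>; this condition is affine in
\<open>G\<^sub>T\<^sub>'\<close> and so survives convex combinations. If \<open>\<LL>\<close> is compact, its members stay uniformly
transverse to \<open>L\<close>, so the maps \<open>G\<^sub>T\<close> are uniformly bounded and \<open>-c J\<close> lies below all of them
for large \<open>c\<close>, where \<open>J : H \<rightarrow> L\<close> is defined by \<open>\<omega> (J h) h' = \<langle>h, h'\<rangle>\<close>.\<close>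

lemma closest_point_subspace_orthogonal:
  fixes S :: "'a::euclidean_space set"
  assumes "subspace S" "s \<in> S"
  shows "inner (a - closest_point S a) s = 0"
proof -
  have cl: "closed S" and cv: "convex S" and ne: "S \<noteq> {}"
    using assms(1) closed_subspace subspace_imp_convex subspace_0 by blast+
  let ?p = "closest_point S a"
  have p: "?p \<in> S" using closest_point_in_set[OF cl ne] .
  have "?p + s \<in> S" using assms p subspace_add by blast
  from closest_point_dot[OF cv cl this, of a] have "inner (a - ?p) s \<le> 0" by simp
  moreover have "?p - s \<in> S" using assms p subspace_diff by blast
  from closest_point_dot[OF cv cl this, of a] have "inner (a - ?p) s \<ge> 0"
    by (simp add: inner_diff_right)
  ultimately show ?thesis by linarith
qed

lemma closest_point_subspace_eqI:
  fixes S :: "'a::euclidean_space set"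
  assumes "subspace S" "p \<in> S" "\<forall>s\<in>S. inner (a - p) s = 0"
  shows "closest_point S a = p"
proof -
  have "dist a p \<le> dist a z" if z: "z \<in> S" for z
  proof -
    have "p - z \<in> S" using assms z subspace_diff by blast
    then have "(norm (a - z))\<^sup>2 = (norm (a - p))\<^sup>2 + (norm (p - z))\<^sup>2"
      using norm_add_Pythagorean[of "a - p" "p - z"] assms(3) unfolding orthogonal_def by simp
    then have "(norm (a - p))\<^sup>2 \<le> (norm (a - z))\<^sup>2" by simp
    then show "dist a p \<le> dist a z"
      unfolding dist_norm using power2_le_imp_le norm_ge_zero by blast
  qed
  then show ?thesis
    using closest_point_unique[of S p a] assms(1,2) subspace_imp_convex closed_subspace by metis
qed

lemma linear_closest_point:
  fixes S :: "'a::euclidean_space set"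
  assumes "subspace S"
  shows "linear (closest_point S)"
proof (rule linearI)
  have p: "closest_point S x \<in> S" for x
    using assms closed_subspace subspace_0 closest_point_in_set by blast
  note orth = closest_point_subspace_orthogonal[OF assms]
  fix x y :: 'a and r :: real
  show "closest_point S (x + y) = closest_point S x + closest_point S y"
  proof (rule closest_point_subspace_eqI[OF assms])
    show "closest_point S x + closest_point S y \<in> S" using p assms subspace_add by blast
    have e: "x + y - (closest_point S x + closest_point S y)
        = (x - closest_point S x) + (y - closest_point S y)" by simp
    show "\<forall>s\<in>S. inner (x + y - (closest_point S x + closest_point S y)) s = 0"
      unfolding e inner_add_left using orth by simp
  qed
  show "closest_point S (r *\<^sub>R x) = r *\<^sub>R closest_point S x"
  proof (rule closest_point_subspace_eqI[OF assms])
    show "r *\<^sub>R closest_point S x \<in> S" using p assms subspace_scale by blast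
    have e: "r *\<^sub>R x - r *\<^sub>R closest_point S x = r *\<^sub>R (x - closest_point S x)"
      by (simp add: scaleR_diff_right)
    show "\<forall>s\<in>S. inner (r *\<^sub>R x - r *\<^sub>R closest_point S x) s = 0"
      unfolding e inner_scaleR_left using orth by simp
  qed
qed

lemma blinfun_apply_proj_op:
  fixes S :: "'a::euclidean_space set"
  assumes "subspace S"
  shows "blinfun_apply (proj_op S) = closest_point S"
  unfolding proj_op_def
  using linear_closest_point[OF assms] linear_conv_bounded_linear bounded_linear_Blinfun_apply
  by blast

lemma symplectic_formD:
  assumes "symplectic_form \<omega>"
  shows "bilinear \<omega>" "\<omega> x y = - \<omega> y x" "(\<And>y. \<omega> x y = 0) \<Longrightarrow> x = 0"
  using assms unfolding symplectic_form_def by blast+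

lemma lagrangianD:
  fixes \<omega> :: "'a::euclidean_space \<Rightarrow> 'a \<Rightarrow> real"
  assumes "lagrangian \<omega> L"
  shows "subspace L" "x \<in> L \<Longrightarrow> y \<in> L \<Longrightarrow> \<omega> x y = 0" "2 * dim L = DIM('a)"
  using assms unfolding lagrangian_def by auto

lemma transverse_mem_both_eq_0:
  assumes "transverse A B" "x \<in> A" "x \<in> B"
  shows "x = 0"
  using assms unfolding transverse_def by blast

lemma graph_map_in:
  fixes T L :: "'a::euclidean_space set"
  assumes "transverse T L" "subspace T" "subspace L"
  shows "graph_map L T v \<in> L" "v + graph_map L T v \<in> T"
proof -
  obtain a b where ab: "a \<in> T" "b \<in> L" "v = a + b"
    using assms(1) unfolding transverse_def by blast
  have "- b \<in> L \<and> v + - b \<in> T" using ab assms(3) subspace_neg by auto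
  moreover have "l1 = l2" if "l1 \<in> L \<and> v + l1 \<in> T" "l2 \<in> L \<and> v + l2 \<in> T" for l1 l2
  proof -
    have "l1 - l2 \<in> L" using that assms(3) subspace_diff by blast
    moreover have "(v + l1) - (v + l2) \<in> T" using that assms(2) subspace_diff by blast
    ultimately show "l1 = l2" using transverse_mem_both_eq_0[OF assms(1), of "l1 - l2"] by simp
  qed
  ultimately have "\<exists>!l. l \<in> L \<and> v + l \<in> T" by blast
  then have "graph_map L T v \<in> L \<and> v + graph_map L T v \<in> T"
    unfolding graph_map_def by (rule theI')
  then show "graph_map L T v \<in> L" "v + graph_map L T v \<in> T" by blast+
qed

lemma graph_map_eqI:
  fixes T L :: "'a::euclidean_space set"
  assumes "transverse T L" "subspace T" "subspace L" "l \<in> L" "v + l \<in> T"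
  shows "graph_map L T v = l"
proof -
  note g = graph_map_in[OF assms(1-3), of v]
  have "l - graph_map L T v \<in> L" using g assms subspace_diff by blast
  moreover have "(v + l) - (v + graph_map L T v) \<in> T" using g assms subspace_diff by blast
  ultimately show ?thesis
    using transverse_mem_both_eq_0[OF assms(1), of "l - graph_map L T v"] by simp
qed

lemma linear_graph_map:
  fixes T L :: "'a::euclidean_space set"
  assumes "transverse T L" "subspace T" "subspace L"
  shows "linear (graph_map L T)"
proof (rule linearI)
  note g = graph_map_in[OF assms]
  fix x y :: 'a and r :: real
  show "graph_map L T (x + y) = graph_map L T x + graph_map L T y"
  proof (rule graph_map_eqI[OF assms])
    show "graph_map L T x + graph_map L T y \<in> L" using g assms(3) subspace_add by blast
    have "(x + graph_map L T x) + (y + graph_map L T y) \<in> T" using g assms(2) subspace_add by blast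
    then show "x + y + (graph_map L T x + graph_map L T y) \<in> T" by (simp add: algebra_simps)
  qed
  show "graph_map L T (r *\<^sub>R x) = r *\<^sub>R graph_map L T x"
  proof (rule graph_map_eqI[OF assms])
    show "r *\<^sub>R graph_map L T x \<in> L" using g assms(3) subspace_scale by blast
    have "r *\<^sub>R (x + graph_map L T x) \<in> T" using g assms(2) subspace_scale by blast
    then show "r *\<^sub>R x + r *\<^sub>R graph_map L T x \<in> T" by (simp add: scaleR_add_right)
  qed
qed

lemma rel_form_eq_graph_map: "rel_form \<omega> A B C X = \<omega> (graph_map C A X) X"
  by (simp add: rel_form_def graph_map_def)

definition graph_over :: "'a::euclidean_space set \<Rightarrow> ('a \<Rightarrow> 'a) \<Rightarrow> 'a set" where
  "graph_over H M = (\<lambda>h. h + M h) ` H"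

lemma graph_over_graph_map:
  fixes T L H :: "'a::euclidean_space set"
  assumes "transverse T L" "subspace T" "subspace L" "transverse H L"
  shows "graph_over H (graph_map L T) = T"
proof
  show "graph_over H (graph_map L T) \<subseteq> T"
    unfolding graph_over_def using graph_map_in[OF assms(1-3)] by blast
  show "T \<subseteq> graph_over H (graph_map L T)"
  proof
    fix v assume v: "v \<in> T"
    obtain a b where ab: "a \<in> H" "b \<in> L" "v = a + b"
      using assms(4) unfolding transverse_def by blast
    have "graph_map L T a = b" using graph_map_eqI[OF assms(1-3) ab(2)] ab v by simp
    then show "v \<in> graph_over H (graph_map L T)" unfolding graph_over_def using ab by blast
  qed
qed

lemma transverse_add_eq_0_iff:
  fixes H L :: "'a::euclidean_space set"
  assumes "transverse H L" "subspace L" "linear M" "\<And>x. M x \<in> L" "h \<in> H"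
  shows "h + M h = 0 \<longleftrightarrow> h = 0"
proof
  assume "h + M h = 0"
  then have "h = - M h" by (simp add: eq_neg_iff_add_eq_0)
  then have "h \<in> L" using assms(2,4) subspace_neg by metis
  then show "h = 0" using transverse_mem_both_eq_0[OF assms(1,5)] by simp
qed (simp add: linear_0[OF assms(3)])

lemma transverse_graph_over:
  fixes H L :: "'a::euclidean_space set"
  assumes "transverse H L" "subspace H" "subspace L" "linear M" "\<And>x. M x \<in> L"
  shows "transverse (graph_over H M) L"
  unfolding transverse_def
proof (intro conjI allI)
  show "graph_over H M \<inter> L = {0}"
  proof
    show "graph_over H M \<inter> L \<subseteq> {0}"
    proof
      fix v assume "v \<in> graph_over H M \<inter> L"
      then obtain h where h: "h \<in> H" "v = h + M h" "v \<in> L" unfolding graph_over_def by blast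
      then have "h = v - M h" by simp
      then have "h \<in> L" using h assms(3,5) subspace_diff by metis
      then have "h = 0" using transverse_mem_both_eq_0[OF assms(1) h(1)] by simp
      then show "v \<in> {0}" using h linear_0[OF assms(4)] by simp
    qed
    show "{0} \<subseteq> graph_over H M \<inter> L"
      using assms(2,3) subspace_0 linear_0[OF assms(4)] unfolding graph_over_def by force
  qed
  fix v
  obtain a b where ab: "a \<in> H" "b \<in> L" "v = a + b"
    using assms(1) unfolding transverse_def by blast
  have "a + M a \<in> graph_over H M" using ab unfolding graph_over_def by blast
  moreover have "b - M a \<in> L" using ab assms(3,5) subspace_diff by blast
  moreover have "v = (a + M a) + (b - M a)" using ab by simp
  ultimately show "\<exists>x\<in>graph_over H M. \<exists>y\<in>L. v = x + y" by blast
qed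

text \<open>In the chart given by \<open>H\<close>, the Lagrangians transverse to \<open>L\<close> are the graphs of these
maps, i.e. of the quadratic forms \<open>h \<mapsto> \<omega> (M h) h\<close> on \<open>H\<close>.\<close>
definition symmetric_map ::
    "('a::euclidean_space \<Rightarrow> 'a \<Rightarrow> real) \<Rightarrow> 'a set \<Rightarrow> 'a set \<Rightarrow> ('a \<Rightarrow> 'a) \<Rightarrow> bool" where
  "symmetric_map \<omega> H L M \<longleftrightarrow>
     linear M \<and> (\<forall>x. M x \<in> L) \<and> (\<forall>h1\<in>H. \<forall>h2\<in>H. \<omega> (M h1) h2 = \<omega> (M h2) h1)"

lemma symmetric_map_graph_map:
  fixes \<omega> :: "'a::euclidean_space \<Rightarrow> 'a \<Rightarrow> real"
  assumes sf: "symplectic_form \<omega>" and lH: "lagrangian \<omega> H" and lL: "lagrangian \<omega> L"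
    and lT: "lagrangian \<omega> T" and tTL: "transverse T L"
  shows "symmetric_map \<omega> H L (graph_map L T)"
  unfolding symmetric_map_def
proof (intro conjI allI ballI)
  note bl = symplectic_formD(1)[OF sf]
  note g = graph_map_in[OF tTL lagrangianD(1)[OF lT] lagrangianD(1)[OF lL]]
  show "linear (graph_map L T)"
    using linear_graph_map[OF tTL lagrangianD(1)[OF lT] lagrangianD(1)[OF lL]] .
  show "graph_map L T x \<in> L" for x using g(1) .
  fix h1 h2 assume h: "h1 \<in> H" "h2 \<in> H"
  let ?G = "graph_map L T"
  have "0 = \<omega> (h1 + ?G h1) (h2 + ?G h2)" using lagrangianD(2)[OF lT] g(2) by metis
  also have "\<dots> = \<omega> h1 h2 + \<omega> h1 (?G h2) + \<omega> (?G h1) h2 + \<omega> (?G h1) (?G h2)"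
    by (simp add: bilinear_ladd[OF bl] bilinear_radd[OF bl])
  also have "\<dots> = \<omega> h1 (?G h2) + \<omega> (?G h1) h2"
    using lagrangianD(2)[OF lH h] lagrangianD(2)[OF lL g(1) g(1)] by simp
  finally show "\<omega> (?G h1) h2 = \<omega> (?G h2) h1"
    using symplectic_formD(2)[OF sf, of h1 "?G h2"] by simp
qed

lemma symmetric_map_lincomb:
  assumes "bilinear \<omega>" "subspace L" "symmetric_map \<omega> H L M1" "symmetric_map \<omega> H L M2"
  shows "symmetric_map \<omega> H L (\<lambda>x. a *\<^sub>R M1 x + b *\<^sub>R M2 x)"
  using assms unfolding symmetric_map_def
  by (auto simp: linear_compose_add linear_compose_scale_right subspace_add subspace_scale
      bilinear_ladd bilinear_lmul)

lemma lagrangian_graph_over: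
  fixes \<omega> :: "'a::euclidean_space \<Rightarrow> 'a \<Rightarrow> real"
  assumes sf: "symplectic_form \<omega>" and lH: "lagrangian \<omega> H" and lL: "lagrangian \<omega> L"
    and tHL: "transverse H L" and M: "symmetric_map \<omega> H L M"
  shows "lagrangian \<omega> (graph_over H M)"
proof -
  note bl = symplectic_formD(1)[OF sf]
  have linM: "linear M" and M_in_L: "\<And>x. M x \<in> L"
    and symM: "\<And>h1 h2. h1 \<in> H \<Longrightarrow> h2 \<in> H \<Longrightarrow> \<omega> (M h1) h2 = \<omega> (M h2) h1"
    using M unfolding symmetric_map_def by auto
  have sH: "subspace H" and sL: "subspace L" using lH lL by (simp_all add: lagrangianD)
  let ?f = "\<lambda>h. h + M h"
  have linf: "linear ?f"
    by (rule linearI) (simp_all add: linear_add[OF linM] linear_scale[OF linM] scaleR_add_right)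
  have "\<omega> x y = 0" if xy: "x \<in> graph_over H M" "y \<in> graph_over H M" for x y
  proof -
    obtain h1 h2 where h: "h1 \<in> H" "h2 \<in> H" "x = ?f h1" "y = ?f h2"
      using xy unfolding graph_over_def by blast
    have "\<omega> x y = \<omega> h1 h2 + \<omega> h1 (M h2) + \<omega> (M h1) h2 + \<omega> (M h1) (M h2)"
      using h by (simp add: bilinear_ladd[OF bl] bilinear_radd[OF bl])
    also have "\<dots> = \<omega> h1 (M h2) + \<omega> (M h1) h2"
      using lagrangianD(2)[OF lH h(1,2)] lagrangianD(2)[OF lL M_in_L M_in_L] by simp
    also have "\<dots> = 0" using symM[OF h(2,1)] symplectic_formD(2)[OF sf, of h1 "M h2"] by simp
    finally show ?thesis .
  qed
  moreover have "inj_on ?f (span H)"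
  proof (rule inj_onI)
    fix x y assume xy: "x \<in> span H" "y \<in> span H" "?f x = ?f y"
    have "x - y \<in> H" using xy sH span_eq_iff subspace_diff by metis
    moreover have "x - y = M y - M x" using xy(3) by (simp add: algebra_simps)
    then have "x - y \<in> L" using M_in_L sL subspace_diff by metis
    ultimately show "x = y" using transverse_mem_both_eq_0[OF tHL, of "x - y"] by simp
  qed
  then have "dim (graph_over H M) = dim H" unfolding graph_over_def by (rule dim_image_eq[OF linf])
  ultimately show ?thesis
    using linear_subspace_image[OF linf sH] lagrangianD(3)[OF lH]
    unfolding lagrangian_def graph_over_def by simp
qed

lemma rel_form_graph_over:
  fixes \<omega> :: "'a::euclidean_space \<Rightarrow> 'a \<Rightarrow> real"
  assumes bl: "bilinear \<omega>" and lL: "lagrangian \<omega> L" and tTL: "transverse T L"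
    and sT: "subspace T" and Mh: "M h \<in> L"
  shows "rel_form \<omega> T B L (h + M h) = \<omega> (graph_map L T h - M h) h"
proof -
  note g = graph_map_in[OF tTL sT lagrangianD(1)[OF lL], of h]
  have GM: "graph_map L T h - M h \<in> L" using g Mh lagrangianD(1)[OF lL] subspace_diff by blast
  have "graph_map L T (h + M h) = graph_map L T h - M h"
    using graph_map_eqI[OF tTL sT lagrangianD(1)[OF lL] GM] g by simp
  then have "rel_form \<omega> T B L (h + M h) = \<omega> (graph_map L T h - M h) (h + M h)"
    by (simp add: rel_form_eq_graph_map)
  also have "\<dots> = \<omega> (graph_map L T h - M h) h"
    using lagrangianD(2)[OF lL GM Mh] by (simp add: bilinear_radd[OF bl])
  finally show ?thesis .
qed

lemma pos_zone_graph_over_iff: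
  fixes \<omega> :: "'a::euclidean_space \<Rightarrow> 'a \<Rightarrow> real"
  assumes sf: "symplectic_form \<omega>" and lH: "lagrangian \<omega> H" and lL: "lagrangian \<omega> L"
    and tHL: "transverse H L" and M: "symmetric_map \<omega> H L M"
    and lT: "lagrangian \<omega> T" and tTL: "transverse T L"
  shows "T \<in> pos_zone \<omega> (graph_over H M) L \<longleftrightarrow>
    (\<forall>h\<in>H. h \<noteq> 0 \<longrightarrow> \<omega> (graph_map L T h - M h) h > 0)"
proof -
  have linM: "linear M" and M_in_L: "\<And>x. M x \<in> L" using M unfolding symmetric_map_def by auto
  have sL: "subspace L" using lL by (rule lagrangianD)
  note rel = rel_form_graph_over[where M = M,
      OF symplectic_formD(1)[OF sf] lL tTL lagrangianD(1)[OF lT] M_in_L]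
  have "(\<forall>X\<in>graph_over H M. X \<noteq> 0 \<longrightarrow> rel_form \<omega> T (graph_over H M) L X > 0) \<longleftrightarrow>
    (\<forall>h\<in>H. h \<noteq> 0 \<longrightarrow> \<omega> (graph_map L T h - M h) h > 0)"
    unfolding graph_over_def using transverse_add_eq_0_iff[OF tHL sL linM M_in_L] rel by auto
  moreover have "transverse (graph_over H M) L"
    using transverse_graph_over[OF tHL lagrangianD(1)[OF lH] sL linM M_in_L] .
  ultimately show ?thesis using lT tTL unfolding pos_zone_def succ_rel_def by auto
qed

lemma graph_over_in_S_set_iff:
  fixes \<omega> :: "'a::euclidean_space \<Rightarrow> 'a \<Rightarrow> real"
  assumes sf: "symplectic_form \<omega>" and lH: "lagrangian \<omega> H" and lL: "lagrangian \<omega> L"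
    and tHL: "transverse H L" and M: "symmetric_map \<omega> H L M"
    and \<LL>: "\<forall>T\<in>\<LL>. lagrangian \<omega> T \<and> transverse T L"
  shows "graph_over H M \<in> S_set \<omega> \<LL> L \<longleftrightarrow>
    (\<forall>T\<in>\<LL>. \<forall>h\<in>H. h \<noteq> 0 \<longrightarrow> \<omega> (graph_map L T h - M h) h > 0)"
proof -
  have "transverse (graph_over H M) L"
    using M transverse_graph_over[OF tHL lagrangianD(1)[OF lH] lagrangianD(1)[OF lL]]
    unfolding symmetric_map_def by blast
  then show ?thesis
    using lagrangian_graph_over[OF sf lH lL tHL M] pos_zone_graph_over_iff[OF sf lH lL tHL M] \<LL>
    unfolding S_set_def by blast
qed

lemma lag_convex_S_set:
  fixes \<omega> :: "'a::euclidean_space \<Rightarrow> 'a \<Rightarrow> real"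
  assumes sf: "symplectic_form \<omega>" and lL: "lagrangian \<omega> L"
    and \<LL>: "\<forall>T\<in>\<LL>. lagrangian \<omega> T \<and> transverse T L"
  shows "lag_convex \<omega> L (S_set \<omega> \<LL> L)"
  unfolding lag_convex_def
proof (intro allI impI ballI)
  fix H T1 T2 t
  assume H: "lagrangian \<omega> H \<and> transverse H L" and T1: "T1 \<in> S_set \<omega> \<LL> L"
    and T2: "T2 \<in> S_set \<omega> \<LL> L" and t: "t \<in> {0..1::real}"
  have lH: "lagrangian \<omega> H" and tHL: "transverse H L" using H by auto
  note S_set_iff = graph_over_in_S_set_iff[OF sf lH lL tHL _ \<LL>]
  have below: "\<forall>T\<in>\<LL>. \<forall>h\<in>H. h \<noteq> 0 \<longrightarrow> \<omega> (graph_map L T h - graph_map L T' h) h > 0"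
    and sym: "symmetric_map \<omega> H L (graph_map L T')"
    if T': "T' \<in> S_set \<omega> \<LL> L" for T'
  proof -
    have lT': "lagrangian \<omega> T'" and tT'L: "transverse T' L" using T' unfolding S_set_def by auto
    show sym: "symmetric_map \<omega> H L (graph_map L T')"
      using symmetric_map_graph_map[OF sf lH lL lT' tT'L] .
    have "graph_over H (graph_map L T') = T'"
      using graph_over_graph_map[OF tT'L lagrangianD(1)[OF lT'] lagrangianD(1)[OF lL] tHL] .
    then show "\<forall>T\<in>\<LL>. \<forall>h\<in>H. h \<noteq> 0 \<longrightarrow> \<omega> (graph_map L T h - graph_map L T' h) h > 0"
      using S_set_iff[OF sym] T' by simp
  qed
  define M where "M = (\<lambda>h. (1 - t) *\<^sub>R graph_map L T1 h + t *\<^sub>R graph_map L T2 h)"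
  have symM: "symmetric_map \<omega> H L M"
    unfolding M_def using symmetric_map_lincomb[OF symplectic_formD(1)[OF sf] lagrangianD(1)[OF lL]
      sym[OF T1] sym[OF T2]] .
  have "aff_comb H L t T1 T2 = graph_over H M"
    unfolding aff_comb_def graph_over_def M_def by auto
  also have "\<dots> \<in> S_set \<omega> \<LL> L"
    unfolding S_set_iff[OF symM]
  proof (intro ballI impI)
    fix T h assume T: "T \<in> \<LL>" and h: "h \<in> H" "h \<noteq> 0"
    let ?d = "\<lambda>T'. \<omega> (graph_map L T h - graph_map L T' h) h"
    have "graph_map L T h - M h
        = (1 - t) *\<^sub>R (graph_map L T h - graph_map L T1 h) + t *\<^sub>R (graph_map L T h - graph_map L T2 h)"
      unfolding M_def by (simp add: algebra_simps)
    then have "\<omega> (graph_map L T h - M h) h = (1 - t) * ?d T1 + t * ?d T2"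
      using symplectic_formD(1)[OF sf] by (simp add: bilinear_ladd bilinear_lmul)
    moreover have "(1 - t) * - ?d T1 + t * - ?d T2 < 0"
      using below[OF T1] below[OF T2] T h t by (intro convex_bound_lt) auto
    ultimately show "\<omega> (graph_map L T h - M h) h > 0" by simp
  qed
  finally show "aff_comb H L t T1 T2 \<in> S_set \<omega> \<LL> L" .
qed

lemma symplectic_form_represents_inner:
  fixes \<omega> :: "'a::euclidean_space \<Rightarrow> 'a \<Rightarrow> real"
  assumes sf: "symplectic_form \<omega>"
  obtains g where "linear g" "\<And>x y. \<omega> (g x) y = inner x y"
proof -
  note bl = symplectic_formD(1)[OF sf]
  define R where "R x = (\<Sum>b\<in>Basis. \<omega> x b *\<^sub>R b)" for x
  have R: "inner (R x) y = \<omega> x y" for x y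
  proof -
    have lin: "linear (\<omega> x)" using bl unfolding bilinear_def by auto
    have "\<omega> x y = \<omega> x (\<Sum>b\<in>Basis. inner y b *\<^sub>R b)" by (simp add: euclidean_representation)
    also have "\<dots> = (\<Sum>b\<in>Basis. inner y b * \<omega> x b)"
      by (simp add: linear_sum[OF lin] linear_scale[OF lin])
    also have "\<dots> = inner (R x) y"
      unfolding R_def by (simp add: inner_sum_left inner_sum_right inner_commute[of _ y] mult.commute)
    finally show ?thesis by simp
  qed
  have linR: "linear R" unfolding R_def
    by (rule linearI)
      (simp_all add: bilinear_ladd[OF bl] bilinear_lmul[OF bl] scaleR_add_left sum.distrib
        scaleR_sum_right)
  have "inj R"
    unfolding linear_injective_0[OF linR]
    using R symplectic_formD(3)[OF sf] by (metis inner_zero_left)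
  then obtain g where "linear g" "\<And>x. R (g x) = x"
    using linR linear_injective_isomorphism by blast
  then show thesis using that R by metis
qed

lemma lagrangian_represents_inner_on_transverse:
  fixes \<omega> :: "'a::euclidean_space \<Rightarrow> 'a \<Rightarrow> real"
  assumes sf: "symplectic_form \<omega>" and lH: "lagrangian \<omega> H" and lL: "lagrangian \<omega> L"
    and tHL: "transverse H L"
  obtains J where "linear J" "\<And>x. J x \<in> L" "\<And>x h. h \<in> H \<Longrightarrow> \<omega> (J x) h = inner x h"
proof -
  obtain g where g: "linear g" "\<And>x y. \<omega> (g x) y = inner x y"
    using symplectic_form_represents_inner[OF sf] by blast
  have sH: "subspace H" and sL: "subspace L" using lH lL by (simp_all add: lagrangianD)
  define J where "J x = - graph_map L H (g x)" for x
  have "linear J"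
    unfolding J_def using linear_compose[OF g(1) linear_graph_map[OF tHL sH sL]]
    by (simp add: o_def linear_compose_neg)
  moreover have "J x \<in> L" for x
    unfolding J_def using graph_map_in(1)[OF tHL sH sL] sL subspace_neg by blast
  moreover have "\<omega> (J x) h = inner x h" if h: "h \<in> H" for x h
  proof -
    have "\<omega> (g x + graph_map L H (g x)) h = 0"
      using lagrangianD(2)[OF lH graph_map_in(2)[OF tHL sH sL] h] .
    then show ?thesis
      unfolding J_def using g(2) symplectic_formD(1)[OF sf] by (simp add: bilinear_ladd bilinear_lneg)
  qed
  ultimately show thesis using that by blast
qed

lemma compact_proj_op_transverse_bound:
  fixes \<LL> :: "'a::euclidean_space set set"
  assumes cpt: "compact (proj_op ` \<LL>)" and sL: "subspace L"
    and \<LL>: "\<And>T. T \<in> \<LL> \<Longrightarrow> subspace T \<and> T \<inter> L = {0}"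
  obtains \<delta> where "\<delta> > 0" "\<And>T l. T \<in> \<LL> \<Longrightarrow> l \<in> L \<Longrightarrow> \<delta> * norm l \<le> norm (closest_point T l - l)"
proof -
  define U where "U = L \<inter> sphere 0 1"
  define f where "f z = norm (blinfun_apply (fst z) (snd z) - snd z)" for z :: "('a \<Rightarrow>\<^sub>L 'a) \<times> 'a"
  have f: "f (proj_op T, u) = norm (closest_point T u - u)" if "T \<in> \<LL>" for T u
    unfolding f_def using blinfun_apply_proj_op[of T] \<LL>[OF that] by simp
  have "compact U" unfolding U_def using closed_subspace[OF sL] compact_sphere by (rule closed_Int_compact)
  with cpt have cpt_U: "compact (proj_op ` \<LL> \<times> U)" by (rule compact_Times)
  have cont: "continuous_on (proj_op ` \<LL> \<times> U) f" unfolding f_def by (intro continuous_intros)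
  have pos: "f z > 0" if z: "z \<in> proj_op ` \<LL> \<times> U" for z
  proof -
    obtain T u where Tu: "T \<in> \<LL>" "u \<in> U" "z = (proj_op T, u)" using z by blast
    have sT: "subspace T" and TL: "T \<inter> L = {0}" using \<LL>[OF Tu(1)] by auto
    have "u \<in> L" "u \<noteq> 0" using Tu(2) unfolding U_def by auto
    then have "u \<notin> T" using TL by blast
    then have "closest_point T u \<noteq> u"
      using closest_point_refl[OF closed_subspace[OF sT]] subspace_0[OF sT] by blast
    then show ?thesis using f[OF Tu(1)] Tu(3) by simp
  qed
  obtain \<delta> where \<delta>: "\<delta> > 0" "\<And>z. z \<in> proj_op ` \<LL> \<times> U \<Longrightarrow> \<delta> \<le> f z"
  proof (cases "proj_op ` \<LL> \<times> U = {}")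
    case False
    then obtain z0 where "z0 \<in> proj_op ` \<LL> \<times> U" "\<forall>z\<in>proj_op ` \<LL> \<times> U. f z0 \<le> f z"
      using continuous_attains_inf[OF cpt_U False cont] by blast
    then show thesis using that[of "f z0"] pos by blast
  qed (use that[of 1] in auto)
  have "\<delta> * norm l \<le> norm (closest_point T l - l)" if T: "T \<in> \<LL>" and l: "l \<in> L" for T l
  proof (cases "l = 0")
    case False
    have sT: "subspace T" using \<LL>[OF T] by blast
    define u where "u = (1 / norm l) *\<^sub>R l"
    have "u \<in> U" unfolding U_def u_def using l sL subspace_scale False by auto
    then have "\<delta> \<le> f (proj_op T, u)" using \<delta>(2) T by blast
    also have "\<dots> = norm (closest_point T u - u)" using f[OF T] .
    also have "closest_point T u - u = (1 / norm l) *\<^sub>R (closest_point T l - l)"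
      unfolding u_def linear_scale[OF linear_closest_point[OF sT]] by (simp add: scaleR_diff_right)
    also have "norm \<dots> = norm (closest_point T l - l) / norm l" by simp
    finally show ?thesis using False by (simp add: field_simps)
  qed simp
  then show thesis using that \<delta>(1) by blast
qed

lemma norm_closest_point_graph_map_le:
  fixes T L :: "'a::euclidean_space set"
  assumes "transverse T L" "subspace T" "subspace L"
  shows "norm (closest_point T (graph_map L T h) - graph_map L T h) \<le> norm h"
proof -
  let ?G = "graph_map L T h"
  have "closest_point T (h + ?G) = h + ?G" using graph_map_in(2)[OF assms] by (rule closest_point_self)
  then have "closest_point T ?G - ?G = h - closest_point T h"
    using linear_add[OF linear_closest_point[OF assms(2)]] by (simp add: algebra_simps)
  then have "norm (closest_point T ?G - ?G) = dist h (closest_point T h)" by (simp add: dist_norm)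
  also have "\<dots> \<le> dist h 0"
    using closest_point_le[OF closed_subspace[OF assms(2)] subspace_0[OF assms(2)]] .
  finally show ?thesis by simp
qed

lemma compact_proj_op_graph_map_bound:
  fixes \<LL> :: "'a::euclidean_space set set"
  assumes cpt: "compact (proj_op ` \<LL>)" and sL: "subspace L"
    and \<LL>: "\<And>T. T \<in> \<LL> \<Longrightarrow> subspace T \<and> transverse T L"
  obtains C where "\<And>T h. T \<in> \<LL> \<Longrightarrow> norm (graph_map L T h) \<le> C * norm h"
proof -
  have "T \<inter> L = {0}" if "T \<in> \<LL>" for T using \<LL>[OF that] unfolding transverse_def by blast
  then obtain \<delta> where \<delta>: "\<delta> > 0"
    "\<And>T l. T \<in> \<LL> \<Longrightarrow> l \<in> L \<Longrightarrow> \<delta> * norm l \<le> norm (closest_point T l - l)"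
    using compact_proj_op_transverse_bound[OF cpt sL] \<LL> by metis
  have "norm (graph_map L T h) \<le> 1 / \<delta> * norm h" if T: "T \<in> \<LL>" for T h
  proof -
    have tTL: "transverse T L" and sT: "subspace T" using \<LL>[OF T] by auto
    have "\<delta> * norm (graph_map L T h) \<le> norm h"
      using \<delta>(2)[OF T graph_map_in(1)[OF tTL sT sL]] norm_closest_point_graph_map_le[OF tTL sT sL]
      by (rule order_trans)
    then show ?thesis using \<delta>(1) by (simp add: field_simps)
  qed
  then show thesis using that by blast
qed

lemma S_set_nonempty:
  fixes \<omega> :: "'a::euclidean_space \<Rightarrow> 'a \<Rightarrow> real"
  assumes sf: "symplectic_form \<omega>" and lH: "lagrangian \<omega> H" and lL: "lagrangian \<omega> L"
    and tHL: "transverse H L" and \<LL>: "\<forall>T\<in>\<LL>. lagrangian \<omega> T \<and> transverse T L"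
    and cpt: "compact (proj_op ` \<LL>)"
  shows "S_set \<omega> \<LL> L \<noteq> {}"
proof -
  note bl = symplectic_formD(1)[OF sf]
  have sL: "subspace L" using lL by (rule lagrangianD)
  obtain J where J: "linear J" "\<And>x. J x \<in> L" "\<And>x h. h \<in> H \<Longrightarrow> \<omega> (J x) h = inner x h"
    using lagrangian_represents_inner_on_transverse[OF sf lH lL tHL] by blast
  obtain C where C: "\<And>T h. T \<in> \<LL> \<Longrightarrow> norm (graph_map L T h) \<le> C * norm h"
    using compact_proj_op_graph_map_bound[OF cpt sL] \<LL> lagrangianD(1) by metis
  obtain B where B: "B > 0" "\<And>x y. norm (\<omega> x y) \<le> B * norm x * norm y"
    using bilinear_bounded_pos[OF bl] by blast
  define c where "c = B * C + 1"
  define M where "M x = - c *\<^sub>R J x" for x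
  have "linear M" unfolding M_def using J(1) by (rule linear_compose_scale_right)
  moreover have "M x \<in> L" for x unfolding M_def using sL J(2) by (rule subspace_scale)
  moreover have "\<omega> (M h1) h2 = \<omega> (M h2) h1" if "h1 \<in> H" "h2 \<in> H" for h1 h2
    unfolding M_def using that by (simp add: bilinear_lneg[OF bl] bilinear_lmul[OF bl] J(3) inner_commute)
  ultimately have M: "symmetric_map \<omega> H L M" unfolding symmetric_map_def by blast
  have "graph_over H M \<in> S_set \<omega> \<LL> L"
    unfolding graph_over_in_S_set_iff[OF sf lH lL tHL M \<LL>]
  proof (intro ballI impI)
    fix T h assume T: "T \<in> \<LL>" and h: "h \<in> H" "h \<noteq> 0"
    have "norm (\<omega> (graph_map L T h) h) \<le> B * (C * norm h) * norm h"
      using B C[OF T] by (meson mult_right_mono mult_left_mono less_imp_le norm_ge_zero order_trans)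
    then have lower: "\<omega> (graph_map L T h) h \<ge> - (B * C * (norm h)\<^sup>2)"
      by (simp add: power2_eq_square algebra_simps)
    have "\<omega> (graph_map L T h - M h) h = \<omega> (graph_map L T h) h + c * (norm h)\<^sup>2"
      unfolding M_def using J(3)[OF h(1)]
      by (simp add: bilinear_ladd[OF bl] bilinear_lmul[OF bl] power2_norm_eq_inner)
    also have "\<dots> = (\<omega> (graph_map L T h) h + B * C * (norm h)\<^sup>2) + (norm h)\<^sup>2"
      unfolding c_def by (simp add: algebra_simps)
    also have "\<dots> > 0" using lower h(2) by (simp add: add_nonneg_pos)
    finally show "\<omega> (graph_map L T h - M h) h > 0" .
  qed
  then show ?thesis by blast
qed

theorem lemma4p8:
  fixes \<omega> :: "'a::euclidean_space \<Rightarrow> 'a \<Rightarrow> real"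
    and L :: "'a set" and \<LL> :: "'a set set"
  assumes "symplectic_form \<omega>"
    and "lagrangian \<omega> L"
    and "\<LL> \<noteq> {}"
    and "\<forall>T\<in>\<LL>. lagrangian \<omega> T \<and> transverse T L"
  shows "lag_convex \<omega> L (S_set \<omega> \<LL> L)
    \<and> (compact (proj_op ` \<LL>) \<longrightarrow> S_set \<omega> \<LL> L \<noteq> {})"
proof -
  obtain H where "H \<in> \<LL>" using assms(3) by blast
  then have "lagrangian \<omega> H" "transverse H L" using assms(4) by auto
  then show ?thesis
    using lag_convex_S_set[OF assms(1,2,4)] S_set_nonempty[OF assms(1) _ assms(2) _ assms(4)]
    by blast
qed

end
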